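(* Let $X$ be a finite set and $V=\mathbb F_2(X)$ the algebra of $\mathbb F_2$-valued functions on $X$ with pointwise product, with basis $x^\mu=\delta_\mu$ ($\mu\in X$), so $x^\mu\circ x^\nu=\delta_{\mu\nu}x^\mu$ and the calculus on $A=\mathbb F_2[x^\mu:\mu\in X]$ has $[\mathrm dx^\mu,x^\nu]=\delta_{\mu\nu}\mathrm dx^\mu$. Let $g=\sum_{\mu\in X}\mathrm dx^\mu\otimes\mathrm dx^\mu$. Suppose $X=T\sqcup S\sqcup\bar S$ is a partition into three disjoint subsets together with a bijection $S\to\bar S$, $s\mapsto\bar s$. Define $\nabla$ and $\sigma$ by $\nabla\mathrm dx^t=0$ for $t\in T$, and $\nabla\mathrm dx^s=\nabla\mathrm dx^{\bar s}=(\mathrm dx^s+\mathrm dx^{\bar s})\otimes(\mathrm dx^s+\mathrm dx^{\bar s})$ for $s\in S$ (extended by the left Leibniz rule), and $\sigma(\mathrm dx^s\otimes\mathrm dx^s)=\mathrm dx^{\bar s}\otimes\mathrm dx^{\bar s}$, $\sigma(\mathrm dx^{\bar s}\otimes\mathrm dx^{\bar s})=\mathrm dx^s\otimes\mathrm dx^s$, $\sigma(\mathrm dx^s\otimes\mathrm dx^{\bar s})=\mathrm dx^s\otimes\mathrm dx^{\bar s}$, $\sigma(\mathrm dx^{\bar s}\otimes\mathrm dx^s)=\mathrm dx^{\bar s}\otimes\mathrm dx^s$ for $s\in S$, and $\sigma(\mathrm dx^\mu\otimes\mathrm dx^\nu)=\mathrm dx^\nu\otimes\mathrm dx^\mu$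 on all other pairs of generators (extended as a left module map). Then $g$ is a quantum metric, $(\nabla,\sigma)$ is a quantum Levi-Civita connection for $g$, and $R_\nabla=0$.
   Context: Standing setup. Work over $\mathbb F_2$. Let $(V,\circ)$ be a commutative associative algebra over $\mathbb F_2$ with basis $x^1,\dots,x^n$ and structure constants $x^\mu\circ x^\nu=\sum_\rho V^{\mu\nu}{}_\rho x^\rho$. Let $A=\mathbb F_2[x^1,\dots,x^n]$ be the polynomial algebra on the same symbols. The associated differential calculus is the $A$-bimodule $\Omega^1$ which is free as a left $A$-module on $\mathrm dx^1,\dots,\mathrm dx^n$, with right action determined by $\mathrm dx^\mu\, x^\nu=x^\nu\,\mathrm dx^\mu+\sum_\rho V^{\mu\nu}{}_\rho\,\mathrm dx^\rho$, together with the unique map $\mathrm d:A\to\Omega^1$ satisfying the Leibniz rule $\mathrm d(ab)=(\mathrm da)b+a\,\mathrm db$, $\mathrm d(x^\mu)=\mathrm dx^\mu$, $\mathrm d1=0$. The bimodule $\Omega^1\otimes_A\Omega^1$ is free as a left module on $\mathrm dx^\mu\otimes\mathrm dx^\nu$. $\Omega^2$ is the quotient of $\Omega^1\otimes_A\Omega^1$ by the sub-bimodule generated by $\mathrm dx^\mu\otimes\mathrm dx^\mu$ and $\mathrm dx^\mu\otimes\mathrm dx^\nu+\mathrm dx^\nu\otimes \mathrm dx^\mu$; the quotient map is denoted $\wedge$, and $\mathrm d$ is extended to $\Omega^1$ by $\mathrm d(a\,\mathrm dx^\mu)=\mathrm da\wedge\mathrm dx^\mu$. A quantum metric is $g=\sum_{\mu,\nu}g_{\mu\nu}\mathrm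 dx^\mu\otimes\mathrm dx^\nu$ with constants $g_{\mu\nu}\in\mathbb F_2$, $g_{\mu\nu}=g_{\nu\mu}$, the matrix $(g_{\mu\nu})$ invertible, and $g$ central: $x^\rho g=g x^\rho$ for all $\rho$. A bimodule connection is a pair $(\nabla,\sigma)$ with $\nabla:\Omega^1\to\Omega^1\otimes_A\Omega^1$ additive, $\nabla(a\omega)=a\nabla\omega+\mathrm da\otimes\omega$, and $\sigma:\Omega^1\otimes_A\Omega^1\to\Omega^1\otimes_A\Omega^1$ a bimodule map with $\nabla(\omega a)=(\nabla\omega)a+\sigma(\omega\otimes\mathrm da)$. It has constant coefficients if $\nabla\mathrm dx^\mu=\sum\Gamma^\mu{}_{\nu\rho}\mathrm dx^\nu\otimes\mathrm dx^\rho$ with $\Gamma^\mu{}_{\nu\rho}\in\mathbb F_2$. A quantum Levi-Civita connection (QLC) for $g$ is a bimodule connection with $\sigma$ invertible, torsion free ($\wedge\nabla=\mathrm d$ on $\Omega^1$) and metric compatible ($(\nabla\otimes\mathrm{id})g+(\sigma\otimes\mathrm{id})(\mathrm{id}\otimes\nabla)g=0$). Its curvature is $R_\nabla=(\mathrm d\otimes\mathrm{id}-(\wedge\otimes\mathrm{id})(\mathrm{id}\otimes\nabla))\nabla:\Omega^1\to\Omega^2\otimes_A\Omega^1$. *)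

theory Defs
  imports Main "HOL-Library.Poly_Mapping" "HOL-Library.Z2" "HOL-Library.Function_Algebras"
begin

text \<open>Polynomials over F_2 = bit in the variables indexed by the type 'x:
  finitely supported maps from monomials (exponent vectors 'x =>0 nat) to coefficients.\<close>

type_synonym 'x pol = "('x \<Rightarrow>\<^sub>0 nat) \<Rightarrow>\<^sub>0 bit"

definition const :: "bit \<Rightarrow> 'x pol" where
  "const c = Poly_Mapping.single 0 c"

definition Xv :: "'x \<Rightarrow> 'x pol" where
  "Xv \<mu> = Poly_Mapping.single (Poly_Mapping.single \<mu> 1) 1"

definition insertion :: "('x \<Rightarrow> 'x pol) \<Rightarrow> 'x pol \<Rightarrow> 'x pol" where
  "insertion f a = (\<Sum>m\<in>Poly_Mapping.keys a.
      const (Poly_Mapping.lookup a m) * (\<Prod>\<nu>\<in>Poly_Mapping.keys m. f \<nu> ^ Poly_Mapping.lookup m \<nu>))"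

text \<open>For the calculus of
  V = F_2(X) the commutation relation [dx^mu, x^nu] = delta_{mu nu} dx^mu determines the right
  action as  dx^mu a = (shift mu a) dx^mu.\<close>
definition shift :: "'x \<Rightarrow> 'x pol \<Rightarrow> 'x pol" where
  "shift \<mu> a = insertion (\<lambda>\<nu>. Xv \<nu> + (if \<nu> = \<mu> then 1 else 0)) a"

text \<open>Omega^1 is free as a left A-module on dx^mu: an element is its coefficient function.
  Omega^1 (x)_A Omega^1 is free on dx^mu (x) dx^nu; Omega^1 (x)_A Omega^1 (x)_A Omega^1 on
  dx^a (x) dx^b (x) dx^c.\<close>

type_synonym 'x om1 = "'x \<Rightarrow> 'x pol"
type_synonym 'x om11 = "'x \<Rightarrow> 'x \<Rightarrow> 'x pol"
type_synonym 'x om111 = "'x \<Rightarrow> 'x \<Rightarrow> 'x \<Rightarrow> 'x pol"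

definition dx :: "'x \<Rightarrow> 'x om1" where
  "dx \<mu> = (\<lambda>\<nu>. if \<nu> = \<mu> then 1 else 0)"

definition lmul1 :: "'x pol \<Rightarrow> 'x om1 \<Rightarrow> 'x om1" where
  "lmul1 a \<omega> = (\<lambda>\<mu>. a * \<omega> \<mu>)"

definition rmul1 :: "'x om1 \<Rightarrow> 'x pol \<Rightarrow> 'x om1" where
  "rmul1 \<omega> a = (\<lambda>\<mu>. shift \<mu> a * \<omega> \<mu>)"

text \<open>Exterior derivative on A: the unique Leibniz map with d x^mu = dx^mu, namely
  d a = sum_mu (shift mu a - a) dx^mu.\<close>
definition dA :: "'x pol \<Rightarrow> 'x om1" where
  "dA a = (\<lambda>\<mu>. shift \<mu> a - a)"

definition tensor :: "'x om1 \<Rightarrow> 'x om1 \<Rightarrow> 'x om11" where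
  "tensor \<omega> \<eta> = (\<lambda>\<mu> \<nu>. \<omega> \<mu> * shift \<mu> (\<eta> \<nu>))"

definition lmul2 :: "'x pol \<Rightarrow> 'x om11 \<Rightarrow> 'x om11" where
  "lmul2 a \<xi> = (\<lambda>\<mu> \<nu>. a * \<xi> \<mu> \<nu>)"

definition rmul2 :: "'x om11 \<Rightarrow> 'x pol \<Rightarrow> 'x om11" where
  "rmul2 \<xi> a = (\<lambda>\<mu> \<nu>. shift \<mu> (shift \<nu> a) * \<xi> \<mu> \<nu>)"

definition tensor21 :: "'x om11 \<Rightarrow> 'x om1 \<Rightarrow> 'x om111" where
  "tensor21 \<xi> \<eta> = (\<lambda>a b c. \<xi> a b * shift a (shift b (\<eta> c)))"

definition tensor12 :: "'x om1 \<Rightarrow> 'x om11 \<Rightarrow> 'x om111" where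
  "tensor12 \<omega> \<xi> = (\<lambda>a b c. \<omega> a * shift a (\<xi> b c))"

definition lmul3 :: "'x pol \<Rightarrow> 'x om111 \<Rightarrow> 'x om111" where
  "lmul3 r T = (\<lambda>a b c. r * T a b c)"

text \<open>The sub-bimodule of Omega^1 (x)_A Omega^1 generated by dx^mu (x) dx^mu and
  dx^mu (x) dx^nu + dx^nu (x) dx^mu.  Omega^2 is the quotient by it; wedge is the quotient map.\<close>
inductive_set wedge_ker :: "'x om11 set" where
  gen_sq: "tensor (dx \<mu>) (dx \<mu>) \<in> wedge_ker"
| gen_sym: "tensor (dx \<mu>) (dx \<nu>) + tensor (dx \<nu>) (dx \<mu>) \<in> wedge_ker"
| zero: "0 \<in> wedge_ker"
| add: "\<xi> \<in> wedge_ker \<Longrightarrow> \<eta> \<in> wedge_ker \<Longrightarrow> \<xi> + \<eta> \<in> wedge_ker"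
| lmul: "\<xi> \<in> wedge_ker \<Longrightarrow> lmul2 a \<xi> \<in> wedge_ker"
| rmul: "\<xi> \<in> wedge_ker \<Longrightarrow> rmul2 \<xi> a \<in> wedge_ker"

text \<open>Omega^2 (x)_A Omega^1 = (Omega^1 (x) Omega^1 (x) Omega^1) / (ker wedge (x)_A Omega^1):
  the kernel of wedge (x) id is the image of ker wedge (x)_A Omega^1.\<close>
inductive_set wedge_ker3 :: "'x om111 set" where
  gen: "\<xi> \<in> wedge_ker \<Longrightarrow> tensor21 \<xi> \<eta> \<in> wedge_ker3"
| zero: "0 \<in> wedge_ker3"
| add: "T \<in> wedge_ker3 \<Longrightarrow> U \<in> wedge_ker3 \<Longrightarrow> T + U \<in> wedge_ker3"

text \<open>A representative in Omega^1 (x) Omega^1 of d omega in Omega^2, for omega in Omega^1: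
  d(sum_mu omega_mu dx^mu) = sum_mu d(omega_mu) wedge dx^mu.\<close>
definition d1 :: "'x::finite om1 \<Rightarrow> 'x om11" where
  "d1 \<omega> = (\<Sum>\<mu>\<in>UNIV. tensor (dA (\<omega> \<mu>)) (dx \<mu>))"

definition metric_tensor :: "('x \<Rightarrow> 'x \<Rightarrow> bit) \<Rightarrow> 'x om11" where
  "metric_tensor gm = (\<lambda>\<mu> \<nu>. const (gm \<mu> \<nu>))"

definition quantum_metric :: "('x::finite \<Rightarrow> 'x \<Rightarrow> bit) \<Rightarrow> bool" where
  "quantum_metric gm \<longleftrightarrow>
     (\<forall>\<mu> \<nu>. gm \<mu> \<nu> = gm \<nu> \<mu>) \<and>
     (\<exists>h :: 'x \<Rightarrow> 'x \<Rightarrow> bit.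
        (\<forall>\<mu> \<nu>. (\<Sum>\<rho>\<in>UNIV. gm \<mu> \<rho> * h \<rho> \<nu>) = (if \<mu> = \<nu> then 1 else 0)) \<and>
        (\<forall>\<mu> \<nu>. (\<Sum>\<rho>\<in>UNIV. h \<mu> \<rho> * gm \<rho> \<nu>) = (if \<mu> = \<nu> then 1 else 0))) \<and>
     (\<forall>\<rho>. lmul2 (Xv \<rho>) (metric_tensor gm) = rmul2 (metric_tensor gm) (Xv \<rho>))"

definition bimodule_connection :: "('x om1 \<Rightarrow> 'x om11) \<Rightarrow> ('x om11 \<Rightarrow> 'x om11) \<Rightarrow> bool" where
  "bimodule_connection nabla sigma \<longleftrightarrow>
     (\<forall>\<omega> \<eta>. nabla (\<omega> + \<eta>) = nabla \<omega> + nabla \<eta>) \<and>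
     (\<forall>a \<omega>. nabla (lmul1 a \<omega>) = lmul2 a (nabla \<omega>) + tensor (dA a) \<omega>) \<and>
     (\<forall>\<xi> \<eta>. sigma (\<xi> + \<eta>) = sigma \<xi> + sigma \<eta>) \<and>
     (\<forall>a \<xi>. sigma (lmul2 a \<xi>) = lmul2 a (sigma \<xi>)) \<and>
     (\<forall>a \<xi>. sigma (rmul2 \<xi> a) = rmul2 (sigma \<xi>) a) \<and>
     (\<forall>a \<omega>. nabla (rmul1 \<omega> a) = rmul2 (nabla \<omega>) a + sigma (tensor \<omega> (dA a)))"

definition torsion_free :: "('x::finite om1 \<Rightarrow> 'x om11) \<Rightarrow> bool" where
  "torsion_free nabla \<longleftrightarrow> (\<forall>\<omega>. nabla \<omega> - d1 \<omega> \<in> wedge_ker)"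

definition sigma_id :: "('x::finite om11 \<Rightarrow> 'x om11) \<Rightarrow> 'x om111 \<Rightarrow> 'x om111" where
  "sigma_id sigma T = (\<Sum>a\<in>UNIV. \<Sum>b\<in>UNIV. \<Sum>c\<in>UNIV.
      lmul3 (T a b c) (tensor21 (sigma (tensor (dx a) (dx b))) (dx c)))"

text \<open>(nabla (x) id) G + (sigma (x) id)(id (x) nabla) G, computed on the representative
  G = sum_{mu,nu} (G_{mu nu} dx^mu) (x) dx^nu.\<close>
definition nabla_metric :: "('x::finite om1 \<Rightarrow> 'x om11) \<Rightarrow> ('x om11 \<Rightarrow> 'x om11) \<Rightarrow> 'x om11 \<Rightarrow> 'x om111" where
  "nabla_metric nabla sigma G = (\<Sum>\<mu>\<in>UNIV. \<Sum>\<nu>\<in>UNIV.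
      tensor21 (nabla (lmul1 (G \<mu> \<nu>) (dx \<mu>))) (dx \<nu>)
      + sigma_id sigma (tensor12 (lmul1 (G \<mu> \<nu>) (dx \<mu>)) (nabla (dx \<nu>))))"

definition metric_compatible :: "('x::finite om1 \<Rightarrow> 'x om11) \<Rightarrow> ('x om11 \<Rightarrow> 'x om11) \<Rightarrow> 'x om11 \<Rightarrow> bool" where
  "metric_compatible nabla sigma G \<longleftrightarrow> nabla_metric nabla sigma G = 0"

definition QLC :: "'x::finite om11 \<Rightarrow> ('x om1 \<Rightarrow> 'x om11) \<Rightarrow> ('x om11 \<Rightarrow> 'x om11) \<Rightarrow> bool" where
  "QLC G nabla sigma \<longleftrightarrow> bimodule_connection nabla sigma \<and> bij sigma \<and>
     torsion_free nabla \<and> metric_compatible nabla sigma G"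

text \<open>Curvature R(omega) = (d (x) id - (wedge (x) id)(id (x) nabla)) nabla omega, as a representative
  in Omega^1 (x) Omega^1 (x) Omega^1 of an element of Omega^2 (x)_A Omega^1, computed on the
  representative nabla omega = sum_nu xi_nu (x) dx^nu with xi_nu = sum_mu (nabla omega)_{mu nu} dx^mu.\<close>
definition curvature :: "('x::finite om1 \<Rightarrow> 'x om11) \<Rightarrow> 'x om1 \<Rightarrow> 'x om111" where
  "curvature nabla \<omega> = (\<Sum>\<nu>\<in>UNIV.
      tensor21 (d1 (\<lambda>\<mu>. nabla \<omega> \<mu> \<nu>)) (dx \<nu>) - tensor12 (\<lambda>\<mu>. nabla \<omega> \<mu> \<nu>) (nabla (dx \<nu>)))"

definition flat :: "('x::finite om1 \<Rightarrow> 'x om11) \<Rightarrow> bool" where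
  "flat nabla \<longleftrightarrow> (\<forall>\<omega>. curvature nabla \<omega> \<in> wedge_ker3)"

text \<open>Christoffel data: nabla dx^mu.\<close>
definition Gam :: "'x set \<Rightarrow> 'x set \<Rightarrow> 'x set \<Rightarrow> ('x \<Rightarrow> 'x) \<Rightarrow> 'x \<Rightarrow> 'x om11" where
  "Gam T S Sb bar \<mu> =
     (if \<mu> \<in> S then tensor (dx \<mu> + dx (bar \<mu>)) (dx \<mu> + dx (bar \<mu>))
      else if \<mu> \<in> Sb then (let s = inv_into S bar \<mu> in tensor (dx s + dx \<mu>) (dx s + dx \<mu>))
      else 0)"

definition nablaP :: "'x::finite set \<Rightarrow> 'x set \<Rightarrow> 'x set \<Rightarrow> ('x \<Rightarrow> 'x) \<Rightarrow> 'x om1 \<Rightarrow> 'x om11" where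
  "nablaP T S Sb bar \<omega> = (\<Sum>\<mu>\<in>UNIV. lmul2 (\<omega> \<mu>) (Gam T S Sb bar \<mu>) + tensor (dA (\<omega> \<mu>)) (dx \<mu>))"

definition sgen :: "'x set \<Rightarrow> 'x set \<Rightarrow> 'x set \<Rightarrow> ('x \<Rightarrow> 'x) \<Rightarrow> 'x \<Rightarrow> 'x \<Rightarrow> 'x om11" where
  "sgen T S Sb bar \<mu> \<nu> =
     (if \<mu> \<in> S \<and> \<nu> = \<mu> then tensor (dx (bar \<mu>)) (dx (bar \<mu>))
      else if \<mu> \<in> Sb \<and> \<nu> = \<mu> then tensor (dx (inv_into S bar \<mu>)) (dx (inv_into S bar \<mu>))
      else if \<mu> \<in> S \<and> \<nu> = bar \<mu> then tensor (dx \<mu>) (dx \<nu>)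
      else if \<nu> \<in> S \<and> \<mu> = bar \<nu> then tensor (dx \<mu>) (dx \<nu>)
      else tensor (dx \<nu>) (dx \<mu>))"

definition sigmaP :: "'x::finite set \<Rightarrow> 'x set \<Rightarrow> 'x set \<Rightarrow> ('x \<Rightarrow> 'x) \<Rightarrow> 'x om11 \<Rightarrow> 'x om11" where
  "sigmaP T S Sb bar \<xi> = (\<Sum>\<mu>\<in>UNIV. \<Sum>\<nu>\<in>UNIV. lmul2 (\<xi> \<mu> \<nu>) (sgen T S Sb bar \<mu> \<nu>))"


lemma insertion_Xv: "insertion f (Xv \<nu>) = f \<nu>"
  by (simp add: insertion_def Xv_def const_def one_poly_mapping.abs_eq[symmetric])

lemma rmul1_dx_Xv:
  "rmul1 (dx \<mu>) (Xv \<nu>) = lmul1 (Xv \<nu>) (dx \<mu>) + (if \<mu> = \<nu> then dx \<mu> else 0)"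
  by (auto simp: rmul1_def lmul1_def dx_def shift_def insertion_Xv fun_eq_iff)

lemma dA_Xv: "dA (Xv \<mu>) = dx \<mu>"
  by (auto simp: dA_def dx_def shift_def insertion_Xv fun_eq_iff)

end

theory Submission
  imports Defs
begin

text \<open>Everything is computed on coefficient arrays in the left bases. Since
  dx^mu a = (shift mu a) dx^mu, the right actions and the derivative are given by the shift
  automorphisms x^mu |-> x^mu + 1, which are involutive and commute.
  On arrays, sigma permutes the index pairs by an involution, and nabla omega = N(omega) + d omega,
  where the contraction N(omega)_pq = sum_mu omega_mu Gamma^mu_pq is symmetric in p and q; as
  symmetric arrays lie in the kernel of the wedge product, nabla is torsion free. Metric
  compatibility reduces to the identity Gamma^r_pq = Gamma^mu_(nu r) for (mu, nu) = sigma(p, q). In the curvature the Christoffel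
  terms cancel, leaving the components (1 + shift a)(1 + shift b) omega_c, which are symmetric
  in a and b and hence vanish in Omega^2 (x)_A Omega^1.\<close>

declare add_bit_eq_xor[simp del] mult_bit_eq_and[simp del]

lemma bit_add_self [simp]: "(x::bit) + x = 0"
  by (cases x) simp_all

lemma pol_add_self [simp]: "(a::'x pol) + a = 0"
  by (rule poly_mapping_eqI) (simp only: lookup_add lookup_zero bit_add_self)

lemma pol_diff_eq_add: "(a::'x pol) - b = a + b"
  by (rule poly_mapping_eqI) (simp add: lookup_add lookup_minus)

lemma pol_numeral_two [simp]: "(2::'x pol) = 0"
  using pol_add_self[of "1::'x pol"] by (simp only: one_add_one)

lemma const_0 [simp]: "const 0 = 0"
  by (simp add: const_def)

lemma const_1 [simp]: "const 1 = 1"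
  by (simp add: const_def)

lemma const_add: "const (a + b) = const a + const b"
  by (simp add: const_def single_add)

lemma const_mult: "const (a * b) = const a * const b"
  by (simp add: const_def mult_single)

definition eval_monomial :: "('x::finite \<Rightarrow> 'x pol) \<Rightarrow> ('x \<Rightarrow>\<^sub>0 nat) \<Rightarrow> 'x pol" where
  "eval_monomial f m = (\<Prod>\<nu>\<in>UNIV. f \<nu> ^ Poly_Mapping.lookup m \<nu>)"

lemma eval_monomial_add: "eval_monomial f (m + n) = eval_monomial f m * eval_monomial f n"
  by (simp add: eval_monomial_def lookup_add power_add prod.distrib)

lemma insertion_eq_sum_monomials:
  assumes "finite K" "Poly_Mapping.keys a \<subseteq> K"
  shows "insertion f (a::'x::finite pol) = (\<Sum>m\<in>K. const (Poly_Mapping.lookup a m) * eval_monomial f m)"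
proof -
  have "(\<Prod>\<nu>\<in>Poly_Mapping.keys m. f \<nu> ^ Poly_Mapping.lookup m \<nu>) = eval_monomial f m" for m
    unfolding eval_monomial_def by (rule prod.mono_neutral_left) (auto simp: in_keys_iff)
  then show ?thesis
    unfolding insertion_def
    by (simp, intro sum.mono_neutral_left) (use assms in \<open>auto simp: in_keys_iff\<close>)
qed

lemma insertion_keys:
  "insertion f (a::'x::finite pol) = (\<Sum>m\<in>Poly_Mapping.keys a. const (Poly_Mapping.lookup a m) * eval_monomial f m)"
  by (rule insertion_eq_sum_monomials) simp_all

lemma insertion_add: "insertion f ((a::'x::finite pol) + b) = insertion f a + insertion f b"
proof -
  let ?K = "Poly_Mapping.keys a \<union> Poly_Mapping.keys b"
  have "insertion f (a + b) = (\<Sum>m\<in>?K. const (Poly_Mapping.lookup (a + b) m) * eval_monomial f m)"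
    by (rule insertion_eq_sum_monomials) (auto simp: keys_add)
  also have "\<dots> = (\<Sum>m\<in>?K. const (Poly_Mapping.lookup a m) * eval_monomial f m)
      + (\<Sum>m\<in>?K. const (Poly_Mapping.lookup b m) * eval_monomial f m)"
    by (simp add: lookup_add const_add distrib_right sum.distrib)
  also have "\<dots> = insertion f a + insertion f b"
    by (subst (1 2) insertion_eq_sum_monomials[of ?K]) auto
  finally show ?thesis .
qed

lemma insertion_zero [simp]: "insertion f (0::'x::finite pol) = 0"
  by (simp add: insertion_keys)

lemma insertion_sum: "insertion f (\<Sum>i\<in>I. g i :: 'x::finite pol) = (\<Sum>i\<in>I. insertion f (g i))"
  by (induction I rule: infinite_finite_induct) (auto simp: insertion_add)

lemma insertion_single:
  "insertion f (Poly_Mapping.single m c :: 'x::finite pol) = const c * eval_monomial f m"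
  by (cases "c = 0") (auto simp: insertion_keys)

lemma pol_sum_single_keys:
  "(\<Sum>m\<in>Poly_Mapping.keys a. Poly_Mapping.single m (Poly_Mapping.lookup a m)) = (a::'x pol)"
  by (rule poly_mapping_eqI) (simp add: lookup_sum lookup_single when_def in_keys_iff)

lemma insertion_mult: "insertion f ((a::'x::finite pol) * b) = insertion f a * insertion f b"
proof -
  have "a * b = (\<Sum>m\<in>Poly_Mapping.keys a. \<Sum>n\<in>Poly_Mapping.keys b.
      Poly_Mapping.single (m + n) (Poly_Mapping.lookup a m * Poly_Mapping.lookup b n))"
    by (subst (1 2) pol_sum_single_keys[symmetric]) (simp only: sum_product mult_single)
  then have "insertion f (a * b) = (\<Sum>m\<in>Poly_Mapping.keys a. \<Sum>n\<in>Poly_Mapping.keys b.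
      (const (Poly_Mapping.lookup a m) * eval_monomial f m) * (const (Poly_Mapping.lookup b n) * eval_monomial f n))"
    by (simp add: insertion_sum insertion_single const_mult eval_monomial_add mult_ac)
  also have "\<dots> = insertion f a * insertion f b"
    by (simp only: insertion_keys sum_product)
  finally show ?thesis .
qed

lemma insertion_const [simp]: "insertion f (const c :: 'x::finite pol) = const c"
  by (simp add: const_def insertion_single eval_monomial_def)

lemma insertion_one [simp]: "insertion f (1 :: 'x::finite pol) = 1"
  using insertion_const[of f 1] by simp

lemma insertion_power: "insertion f ((a::'x::finite pol) ^ n) = insertion f a ^ n"
  by (induction n) (simp_all add: insertion_mult)

lemma insertion_prod: "insertion f (\<Prod>i\<in>I. g i :: 'x::finite pol) = (\<Prod>i\<in>I. insertion f (g i))"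
  by (induction I rule: infinite_finite_induct) (auto simp: insertion_mult)

lemma insertion_insertion:
  "insertion g (insertion f (a::'x::finite pol)) = insertion (\<lambda>\<nu>. insertion g (f \<nu>)) a"
  by (simp add: insertion_keys[of f a] insertion_keys[of _ a] insertion_sum insertion_mult
      eval_monomial_def insertion_prod insertion_power)

lemma eval_monomial_Xv: "eval_monomial Xv m = Poly_Mapping.single m (1::bit)"
proof -
  have power: "Xv \<nu> ^ k = Poly_Mapping.single (Poly_Mapping.single \<nu> k) (1::bit)" for \<nu> :: 'x and k
    by (induction k) (simp_all add: Xv_def mult_single single_add[symmetric] add.commute)
  have prod: "(\<Prod>i\<in>I. Poly_Mapping.single (g i) (1::bit)) = Poly_Mapping.single (\<Sum>i\<in>I. g i) 1"
    for I and g :: "'x \<Rightarrow> 'x \<Rightarrow>\<^sub>0 nat"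
    by (induction I rule: infinite_finite_induct) (auto simp: mult_single)
  have sum: "(\<Sum>\<nu>\<in>UNIV. Poly_Mapping.single \<nu> (Poly_Mapping.lookup m \<nu>)) = m"
    by (rule poly_mapping_eqI) (simp add: lookup_sum lookup_single when_def)
  show ?thesis
    by (simp only: eval_monomial_def power prod sum)
qed

lemma insertion_Xv_id [simp]: "insertion Xv (a::'x::finite pol) = a"
  by (simp add: insertion_keys eval_monomial_Xv const_def mult_single pol_sum_single_keys)

lemma shift_eq_insertion: "shift \<mu> a = insertion (\<lambda>\<nu>. Xv \<nu> + dx \<mu> \<nu>) a"
  by (simp add: shift_def dx_def)

lemma shift_add [simp]: "shift \<mu> ((a::'x::finite pol) + b) = shift \<mu> a + shift \<mu> b"
  by (simp add: shift_def insertion_add)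

lemma shift_mult [simp]: "shift \<mu> ((a::'x::finite pol) * b) = shift \<mu> a * shift \<mu> b"
  by (simp add: shift_def insertion_mult)

lemma shift_zero [simp]: "shift \<mu> (0::'x::finite pol) = 0"
  by (simp add: shift_def)

lemma shift_one [simp]: "shift \<mu> (1::'x::finite pol) = 1"
  by (simp add: shift_def)

lemma shift_if [simp]:
  "shift \<mu> (if P then a else b :: 'x::finite pol) = (if P then shift \<mu> a else shift \<mu> b)"
  by simp

lemma shift_shift_eq_insertion:
  "shift \<mu> (shift \<nu> (a::'x::finite pol)) = insertion (\<lambda>\<kappa>. Xv \<kappa> + (dx \<mu> \<kappa> + dx \<nu> \<kappa>)) a"
proof -
  have "shift \<mu> (shift \<nu> a) = insertion (\<lambda>\<kappa>. shift \<mu> (Xv \<kappa> + dx \<nu> \<kappa>)) a"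
    unfolding shift_eq_insertion[of \<nu>] by (simp only: shift_eq_insertion[of \<mu>] insertion_insertion)
  also have "(\<lambda>\<kappa>. shift \<mu> (Xv \<kappa> + dx \<nu> \<kappa>)) = (\<lambda>\<kappa>. Xv \<kappa> + (dx \<mu> \<kappa> + dx \<nu> \<kappa>))"
    by (simp add: fun_eq_iff shift_eq_insertion insertion_add insertion_Xv dx_def)
  finally show ?thesis .
qed

lemma shift_commute: "shift \<mu> (shift \<nu> (a::'x::finite pol)) = shift \<nu> (shift \<mu> a)"
  by (simp add: shift_shift_eq_insertion add.commute)

lemma shift_shift [simp]: "shift \<mu> (shift \<mu> (a::'x::finite pol)) = a"
  by (simp add: shift_shift_eq_insertion)

lemma sum_fun_apply: "(\<Sum>i\<in>A. F i) x = (\<Sum>i\<in>A. F i x)"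
  by (induction A rule: infinite_finite_induct) auto

lemma mult_if_1_0 [simp]: "(x::'y::semiring_1) * (if P then 1 else 0) = (if P then x else 0)"
  by simp

lemma sum_sum_delta:
  "(\<Sum>\<mu>\<in>UNIV. \<Sum>\<nu>\<in>UNIV. if a = \<mu> \<and> b = \<nu> then F \<mu> \<nu> else 0) = (F a b :: 'y::comm_monoid_add)"
  for a b :: "'x::finite"
proof -
  have "(\<Sum>\<nu>\<in>UNIV. if a = \<mu> \<and> b = \<nu> then F \<mu> \<nu> else 0) = (if a = \<mu> then F \<mu> b else 0)" for \<mu>
    by (cases "a = \<mu>") simp_all
  then show ?thesis by simp
qed

lemma tensor_dx_dx: "tensor (dx a) (dx b) = (\<lambda>p q. if p = a \<and> q = b then 1 else (0::'x::finite pol))"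
  by (auto simp: tensor_def dx_def fun_eq_iff)

lemma dx_apply: "dx \<mu> \<nu> = (if \<nu> = \<mu> then 1 else 0)"
  by (simp add: dx_def)

lemma sum_mult_dx: "(\<Sum>\<mu>\<in>UNIV. f \<mu> * dx \<mu> q) = (f q :: 'x::finite pol)"
  by (simp add: dx_def)

lemma shift_dx [simp]: "shift \<mu> (dx \<nu> \<kappa> :: 'x::finite pol) = dx \<nu> \<kappa>"
  by (simp add: dx_def)

lemma d1_apply: "d1 \<omega> p q = shift p (\<omega> q) + \<omega> q"
proof -
  have "d1 \<omega> p q = (\<Sum>\<mu>\<in>UNIV. (shift p (\<omega> \<mu>) + \<omega> \<mu>) * dx \<mu> q)"
    by (simp add: d1_def sum_fun_apply tensor_def dA_def pol_diff_eq_add)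
  also have "\<dots> = shift p (\<omega> q) + \<omega> q"
    by (rule sum_mult_dx)
  finally show ?thesis .
qed

lemma wedge_ker_sum: "(\<And>i. i \<in> I \<Longrightarrow> f i \<in> wedge_ker) \<Longrightarrow> (\<Sum>i\<in>I. f i) \<in> wedge_ker"
  by (induction I rule: infinite_finite_induct) (auto intro: wedge_ker.intros)

lemma wedge_ker3_sum: "(\<And>i. i \<in> I \<Longrightarrow> f i \<in> wedge_ker3) \<Longrightarrow> (\<Sum>i\<in>I. f i) \<in> wedge_ker3"
  by (induction I rule: infinite_finite_induct) (auto intro: wedge_ker3.intros)

lemma symmetric_in_wedge_ker:
  fixes \<xi> :: "'x::finite om11"
  assumes sym: "\<And>p q. \<xi> p q = \<xi> q p"
  shows "\<xi> \<in> wedge_ker"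
proof -
  txt \<open>Halving is impossible in characteristic 2, so each unordered pair of distinct indices
    is counted once, with respect to an auxiliary linear order of the indices.\<close>
  obtain f :: "'x \<Rightarrow> nat" where f: "inj f"
    using finite_imp_inj_to_nat_seg[of "UNIV :: 'x set"] by auto
  define h where "h p q = (if f p < f q then \<xi> p q else 0)" for p q
  define Z where "Z = (\<Sum>p\<in>UNIV. \<Sum>q\<in>UNIV. lmul2 (h p q) (tensor (dx p) (dx q) + tensor (dx q) (dx p)))
     + (\<Sum>p\<in>UNIV. lmul2 (\<xi> p p) (tensor (dx p) (dx p)))"
  have "Z \<in> wedge_ker"
    unfolding Z_def
    by (intro wedge_ker.add wedge_ker_sum wedge_ker.lmul wedge_ker.gen_sym wedge_ker.gen_sq)
  moreover have "Z = \<xi>"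
  proof (intro ext)
    fix a b
    have diag: "(\<Sum>p\<in>UNIV. if a = p \<and> b = p then \<xi> p p else 0) = (if a = b then \<xi> a a else 0)"
      by (cases "a = b") (auto intro!: sum.neutral)
    have "Z a b = (\<Sum>p\<in>UNIV. \<Sum>q\<in>UNIV. if a = p \<and> b = q then h p q else 0)
        + (\<Sum>p\<in>UNIV. \<Sum>q\<in>UNIV. if b = p \<and> a = q then h p q else 0)
        + (\<Sum>p\<in>UNIV. if a = p \<and> b = p then \<xi> p p else 0)"
      unfolding Z_def tensor_dx_dx
      by (simp add: sum_fun_apply lmul2_def distrib_left sum.distrib conj_commute)
    also have "\<dots> = h a b + h b a + (if a = b then \<xi> a a else 0)"
      by (simp only: sum_sum_delta diag)
    also have "\<dots> = \<xi> a b"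
      using f[THEN inj_eq, of a b] sym[of a b] by (cases "f a < f b") (auto simp: h_def)
    finally show "Z a b = \<xi> a b" .
  qed
  ultimately show ?thesis by simp
qed

lemma symmetric_in_wedge_ker3:
  fixes X :: "'x::finite om111"
  assumes sym: "\<And>a b c. X a b c = X b a c"
  shows "X \<in> wedge_ker3"
proof -
  have "X = (\<Sum>c\<in>UNIV. tensor21 (\<lambda>a b. X a b c) (dx c))"
    by (simp add: fun_eq_iff sum_fun_apply tensor21_def dx_def if_distrib[of "(*) _"] cong: if_cong)
  also have "\<dots> \<in> wedge_ker3"
    by (intro wedge_ker3_sum wedge_ker3.gen symmetric_in_wedge_ker) (simp add: sym)
  finally show ?thesis .
qed

lemma quantum_metric_delta: "quantum_metric (\<lambda>\<mu> \<nu> :: 'x::finite. if \<mu> = \<nu> then (1::bit) else 0)"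
  unfolding quantum_metric_def
  by (auto simp: fun_eq_iff lmul2_def rmul2_def metric_tensor_def
      intro!: exI[where x = "\<lambda>\<mu> \<nu>. if \<mu> = \<nu> then 1 else 0"])

locale paired_partition =
  fixes T S Sb :: "'x::finite set" and bar :: "'x \<Rightarrow> 'x"
  assumes cover: "T \<union> S \<union> Sb = UNIV"
    and disjoint: "T \<inter> S = {}" "T \<inter> Sb = {}" "S \<inter> Sb = {}"
    and bij: "bij_betw bar S Sb"
begin

definition partner :: "'x \<Rightarrow> 'x" where
  "partner \<mu> = (if \<mu> \<in> S then bar \<mu> else if \<mu> \<in> Sb then inv_into S bar \<mu> else \<mu>)"

lemma bar_in_Sb: "\<mu> \<in> S \<Longrightarrow> bar \<mu> \<in> Sb"
  using bij by (auto simp: bij_betw_def)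

lemma inv_bar_in_S: "\<mu> \<in> Sb \<Longrightarrow> inv_into S bar \<mu> \<in> S"
  using bij by (metis bij_betw_def inv_into_into)

lemma inv_into_bar: "\<mu> \<in> S \<Longrightarrow> inv_into S bar (bar \<mu>) = \<mu>"
  using bij by (simp add: bij_betw_def)

lemma bar_inv_into: "\<mu> \<in> Sb \<Longrightarrow> bar (inv_into S bar \<mu>) = \<mu>"
  using bij by (simp add: bij_betw_def f_inv_into_f)

lemma partner_partner [simp]: "partner (partner \<mu>) = \<mu>"
  using bar_in_Sb inv_bar_in_S inv_into_bar bar_inv_into disjoint unfolding partner_def by auto

lemma partner_eq_iff: "partner \<mu> = \<nu> \<longleftrightarrow> \<mu> = partner \<nu>"
  by (metis partner_partner)

lemma partner_in_T_iff [simp]: "partner \<mu> \<in> T \<longleftrightarrow> \<mu> \<in> T"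
  using bar_in_Sb inv_bar_in_S disjoint cover unfolding partner_def by auto

lemma partner_T: "\<mu> \<in> T \<Longrightarrow> partner \<mu> = \<mu>"
  using disjoint unfolding partner_def by auto

lemma partner_neq: "\<mu> \<notin> T \<Longrightarrow> partner \<mu> \<noteq> \<mu>"
  using bar_in_Sb[of \<mu>] inv_bar_in_S[of \<mu>] disjoint cover unfolding partner_def by auto

text \<open>The Christoffel symbols Gamma^mu_pq vanish unless p and q are linked, i.e. lie in a
  common pair {s, bar s}.\<close>

definition linked :: "'x \<Rightarrow> 'x \<Rightarrow> bool" where
  "linked p q \<longleftrightarrow> p \<notin> T \<and> (q = p \<or> q = partner p)"

lemma linked_sym: "linked p q \<longleftrightarrow> linked q p"
  unfolding linked_def using partner_in_T_iff[of p] by (auto simp: partner_eq_iff)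

lemma linked_partner: "linked p (partner q) \<longleftrightarrow> linked p q"
  unfolding linked_def using partner_T[of q] partner_in_T_iff[of q] by (auto simp: partner_eq_iff)

definition pair_swap :: "'x \<Rightarrow> 'x \<Rightarrow> 'x \<times> 'x" where
  "pair_swap p q = (if p \<notin> T \<and> q = p then (partner p, partner p)
     else if linked p q then (p, q) else (q, p))"

lemma pair_swap_cases:
  obtains "p \<notin> T" "q = p" "pair_swap p q = (partner p, partner p)"
  | "p \<notin> T" "q = partner p" "q \<noteq> p" "pair_swap p q = (p, q)"
  | "\<not> linked p q" "pair_swap p q = (q, p)"
  using partner_neq[of p] unfolding pair_swap_def linked_def
  by (cases "p \<notin> T \<and> q = p"; cases "p \<notin> T \<and> q = partner p") auto

lemma pair_swap_pair_swap: "pair_swap (fst (pair_swap p q)) (snd (pair_swap p q)) = (p, q)"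
  by (cases rule: pair_swap_cases[of p q])
    (use partner_neq[of p] linked_sym[of p q] in \<open>auto simp: pair_swap_def linked_def\<close>)

lemma sgen_eq_pair_swap:
  "sgen T S Sb bar \<mu> \<nu> = tensor (dx (fst (pair_swap \<mu> \<nu>))) (dx (snd (pair_swap \<mu> \<nu>)))"
proof -
  consider "\<mu> \<in> S" "\<nu> = \<mu>" | "\<mu> \<in> Sb" "\<nu> = \<mu>" | "\<mu> \<in> S" "\<nu> = bar \<mu>" | "\<nu> \<in> S" "\<mu> = bar \<nu>"
    | "\<not> (\<mu> \<in> S \<and> \<nu> = \<mu>)" "\<not> (\<mu> \<in> Sb \<and> \<nu> = \<mu>)"
      "\<not> (\<mu> \<in> S \<and> \<nu> = bar \<mu>)" "\<not> (\<nu> \<in> S \<and> \<mu> = bar \<nu>)"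
    by blast
  then show ?thesis
  proof cases
    case 1
    then show ?thesis using disjoint by (auto simp: sgen_def pair_swap_def partner_def)
  next
    case 2
    then show ?thesis using disjoint by (auto simp: sgen_def pair_swap_def partner_def)
  next
    case 3
    then have "\<mu> \<notin> T" "bar \<mu> \<noteq> \<mu>" "partner \<mu> = bar \<mu>"
      using disjoint bar_in_Sb[of \<mu>] by (auto simp: partner_def)
    then show ?thesis using 3 by (simp add: sgen_def pair_swap_def linked_def)
  next
    case 4
    then have "\<mu> \<notin> T" "bar \<nu> \<noteq> \<nu>" "partner \<mu> = \<nu>" "\<mu> \<notin> S" "\<nu> \<notin> Sb"
      using disjoint bar_in_Sb[of \<nu>] inv_into_bar[of \<nu>] by (auto simp: partner_def)
    then show ?thesis using 4 by (simp add: sgen_def pair_swap_def linked_def)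
  next
    case 5
    then have "\<not> (\<mu> \<notin> T \<and> \<nu> = \<mu>)" "\<not> linked \<mu> \<nu>"
      using cover inv_bar_in_S[of \<mu>] bar_inv_into[of \<mu>] disjoint
      by (auto simp: linked_def partner_def)
    then have "pair_swap \<mu> \<nu> = (\<nu>, \<mu>)"
      unfolding pair_swap_def by auto
    moreover have "sgen T S Sb bar \<mu> \<nu> = tensor (dx \<nu>) (dx \<mu>)"
      unfolding sgen_def by (simp only: 5 if_False)
    ultimately show ?thesis by simp
  qed
qed

lemma Gam_apply: "Gam T S Sb bar \<mu> p q = (if linked p q \<and> linked p \<mu> then 1 else 0)"
proof -
  have square: "tensor (dx a + dx b) (dx a + dx b) p q =
      (if (p = a \<or> p = b) \<and> (q = a \<or> q = b) then 1 else (0::'x pol))" if "a \<noteq> b" for a b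
    using that by (auto simp: tensor_def dx_def)
  have pair: "(linked p q \<and> linked p a) \<longleftrightarrow> (p = a \<or> p = b) \<and> (q = a \<or> q = b)"
    if "a \<notin> T" "partner a = b" for a b
    using that partner_neq[of a] by (auto simp: linked_def partner_eq_iff)
  consider "\<mu> \<in> S" | "\<mu> \<in> Sb" | "\<mu> \<in> T"
    using cover by blast
  then show ?thesis
  proof cases
    case 1
    then have "\<mu> \<notin> T" "partner \<mu> = bar \<mu>" "\<mu> \<noteq> bar \<mu>"
      using disjoint bar_in_Sb[of \<mu>] by (auto simp: partner_def)
    then show ?thesis using 1 by (simp add: Gam_def square pair)
  next
    case 2
    then have "\<mu> \<notin> T" "partner \<mu> = inv_into S bar \<mu>" "\<mu> \<noteq> inv_into S bar \<mu>" "\<mu> \<notin> S"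
      using disjoint inv_bar_in_S[of \<mu>] by (auto simp: partner_def)
    then show ?thesis using 2 pair[of \<mu> "inv_into S bar \<mu>"] square[of "inv_into S bar \<mu>" \<mu>]
      by (simp add: Gam_def Let_def)
  next
    case 3
    then show ?thesis using disjoint partner_in_T_iff[of p]
      by (auto simp: Gam_def linked_def partner_eq_iff)
  qed
qed

abbreviation nabla :: "'x om1 \<Rightarrow> 'x om11" where
  "nabla \<equiv> nablaP T S Sb bar"

abbreviation sigma :: "'x om11 \<Rightarrow> 'x om11" where
  "sigma \<equiv> sigmaP T S Sb bar"

definition Gam_contract :: "'x om1 \<Rightarrow> 'x \<Rightarrow> 'x \<Rightarrow> 'x pol" where
  "Gam_contract \<omega> p q = (if linked p q then \<omega> p + \<omega> (partner p) else 0)"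

lemma sum_mult_Gam: "(\<Sum>\<mu>\<in>UNIV. \<omega> \<mu> * Gam T S Sb bar \<mu> p q) = Gam_contract \<omega> p q"
proof (cases "linked p q")
  case True
  then have "p \<notin> T" "partner p \<noteq> p"
    using partner_neq[of p] by (auto simp: linked_def)
  then have "(\<Sum>\<mu>\<in>UNIV. \<omega> \<mu> * Gam T S Sb bar \<mu> p q) = (\<Sum>\<mu>\<in>UNIV. if \<mu> \<in> {p, partner p} then \<omega> \<mu> else 0)"
    using True by (intro sum.cong) (auto simp: Gam_apply linked_def)
  also have "\<dots> = sum \<omega> {p, partner p}"
    by (subst sum.inter_restrict[symmetric]) auto
  finally have "(\<Sum>\<mu>\<in>UNIV. \<omega> \<mu> * Gam T S Sb bar \<mu> p q) = sum \<omega> {p, partner p}" .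
  then show ?thesis
    using True \<open>partner p \<noteq> p\<close> by (simp add: Gam_contract_def)
qed (simp add: Gam_apply Gam_contract_def)

lemma Gam_contract_sym: "Gam_contract \<omega> p q = Gam_contract \<omega> q p"
  unfolding Gam_contract_def linked_def using partner_neq[of p] partner_neq[of q]
  by (auto simp: partner_eq_iff add.commute)

lemma nabla_apply: "nabla \<omega> p q = Gam_contract \<omega> p q + d1 \<omega> p q"
proof -
  have "nabla \<omega> p q = (\<Sum>\<mu>\<in>UNIV. \<omega> \<mu> * Gam T S Sb bar \<mu> p q) + (\<Sum>\<mu>\<in>UNIV. (shift p (\<omega> \<mu>) + \<omega> \<mu>) * dx \<mu> q)"
    by (simp add: nablaP_def sum_fun_apply lmul2_def tensor_def dA_def pol_diff_eq_add sum.distrib)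
  then show ?thesis
    by (simp add: sum_mult_Gam sum_mult_dx d1_apply)
qed

lemma sigma_apply: "sigma \<xi> p q = \<xi> (fst (pair_swap p q)) (snd (pair_swap p q))"
proof -
  have swap_iff: "(p, q) = pair_swap \<mu> \<nu> \<longleftrightarrow> fst (pair_swap p q) = \<mu> \<and> snd (pair_swap p q) = \<nu>" for \<mu> \<nu>
    by (metis pair_swap_pair_swap prod.collapse fst_conv snd_conv)
  have "sigma \<xi> p q = (\<Sum>\<mu>\<in>UNIV. \<Sum>\<nu>\<in>UNIV. if fst (pair_swap p q) = \<mu> \<and> snd (pair_swap p q) = \<nu> then \<xi> \<mu> \<nu> else 0)"
    unfolding swap_iff[symmetric]
    by (simp add: sigmaP_def sum_fun_apply lmul2_def sgen_eq_pair_swap tensor_dx_dx prod_eq_iff conj_commute eq_commute)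
  then show ?thesis
    by (simp only: sum_sum_delta)
qed

lemma torsion_free_nabla: "torsion_free nabla"
  unfolding torsion_free_def
proof
  fix \<omega> :: "'x om1"
  have "nabla \<omega> - d1 \<omega> = Gam_contract \<omega>"
    by (simp add: fun_eq_iff nabla_apply pol_diff_eq_add)
  also have "\<dots> \<in> wedge_ker"
    by (rule symmetric_in_wedge_ker) (rule Gam_contract_sym)
  finally show "nabla \<omega> - d1 \<omega> \<in> wedge_ker" .
qed

lemma nabla_rmul1: "nabla (rmul1 \<omega> a) p q = rmul2 (nabla \<omega>) a p q + sigma (tensor \<omega> (dA a)) p q"
proof (cases rule: pair_swap_cases[of p q])
  case 1
  then show ?thesis
    by (simp add: nabla_apply d1_apply sigma_apply Gam_contract_def linked_def rmul1_def rmul2_def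
        tensor_def dA_def pol_diff_eq_add algebra_simps)
next
  case 2
  then show ?thesis
    by (simp add: nabla_apply d1_apply sigma_apply Gam_contract_def linked_def rmul1_def rmul2_def
        tensor_def dA_def pol_diff_eq_add algebra_simps shift_commute)
next
  case 3
  then show ?thesis
    by (simp add: nabla_apply d1_apply sigma_apply Gam_contract_def rmul1_def rmul2_def
        tensor_def dA_def pol_diff_eq_add algebra_simps shift_commute)
qed

lemma shift_pair_swap: "shift (fst (pair_swap p q)) (shift (snd (pair_swap p q)) a) = shift p (shift q a)"
  by (cases rule: pair_swap_cases[of p q]) (auto simp: shift_commute)

lemma bimodule_connection_nabla: "bimodule_connection nabla sigma"
  unfolding bimodule_connection_def
proof (intro conjI allI)
  fix \<omega> \<eta> :: "'x om1"
  show "nabla (\<omega> + \<eta>) = nabla \<omega> + nabla \<eta>"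
    by (auto simp: fun_eq_iff nabla_apply d1_apply Gam_contract_def algebra_simps)
next
  fix a and \<omega> :: "'x om1"
  show "nabla (lmul1 a \<omega>) = lmul2 a (nabla \<omega>) + tensor (dA a) \<omega>"
    by (auto simp: fun_eq_iff nabla_apply d1_apply Gam_contract_def lmul1_def lmul2_def tensor_def
        dA_def pol_diff_eq_add algebra_simps)
  show "nabla (rmul1 \<omega> a) = rmul2 (nabla \<omega>) a + sigma (tensor \<omega> (dA a))"
    by (simp add: fun_eq_iff nabla_rmul1)
next
  fix \<xi> \<eta> :: "'x om11"
  show "sigma (\<xi> + \<eta>) = sigma \<xi> + sigma \<eta>"
    by (simp add: fun_eq_iff sigma_apply)
next
  fix a and \<xi> :: "'x om11"
  show "sigma (lmul2 a \<xi>) = lmul2 a (sigma \<xi>)"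
    by (simp add: fun_eq_iff sigma_apply lmul2_def)
  show "sigma (rmul2 \<xi> a) = rmul2 (sigma \<xi>) a"
    by (simp add: fun_eq_iff sigma_apply rmul2_def shift_pair_swap)
qed

lemma bij_sigma: "bij sigma"
  by (rule involuntory_imp_bij) (simp add: fun_eq_iff sigma_apply pair_swap_pair_swap)

lemma shift_Gam [simp]: "shift x (Gam T S Sb bar \<mu> p q) = Gam T S Sb bar \<mu> p q"
  by (simp add: Gam_apply)

lemma nabla_dx: "nabla (dx \<mu>) = Gam T S Sb bar \<mu>"
proof (intro ext)
  fix p q
  have "Gam_contract (dx \<mu>) p q = Gam T S Sb bar \<mu> p q"
    unfolding Gam_contract_def Gam_apply dx_def linked_def using partner_neq[of p] by auto
  then show "nabla (dx \<mu>) p q = Gam T S Sb bar \<mu> p q"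
    by (simp add: nabla_apply d1_apply)
qed

lemma sigma_id_apply: "sigma_id sigma X p q r = X (fst (pair_swap p q)) (snd (pair_swap p q)) r"
proof -
  have sum_c: "(\<Sum>c\<in>UNIV. X a b c * (if P then dx c r else 0)) = (if P then X a b r else 0)" for a b P
    by (cases P) (simp_all add: sum_mult_dx)
  have "sigma_id sigma X p q r = (\<Sum>a\<in>UNIV. \<Sum>b\<in>UNIV.
      if fst (pair_swap p q) = a \<and> snd (pair_swap p q) = b then X a b r else 0)"
    by (simp add: sigma_id_def sum_fun_apply lmul3_def tensor21_def sigma_apply tensor_dx_dx
        mult.assoc[symmetric] sum_c if_distrib[of "\<lambda>u. u * _"] cong: if_cong)
  then show ?thesis
    by (simp only: sum_sum_delta)
qed

lemma Gam_pair_swap: "Gam T S Sb bar r p q = Gam T S Sb bar (fst (pair_swap p q)) (snd (pair_swap p q)) r"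
  by (cases rule: pair_swap_cases[of p q])
    (use partner_neq[of p] in \<open>auto simp: Gam_apply linked_def partner_eq_iff\<close>)

lemma metric_compatible_nabla:
  "metric_compatible nabla sigma (metric_tensor (\<lambda>\<mu> \<nu> :: 'x. if \<mu> = \<nu> then (1::bit) else 0))"
  unfolding metric_compatible_def
proof (intro ext)
  fix p q r
  define x where "x = fst (pair_swap p q)"
  define y where "y = snd (pair_swap p q)"
  have coeff: "lmul1 (metric_tensor (\<lambda>\<mu> \<nu>. if \<mu> = \<nu> then 1 else 0) \<mu> \<nu>) (dx \<mu>) =
      (if \<mu> = \<nu> then dx \<mu> else 0)" for \<mu> \<nu> :: 'x
    by (auto simp: fun_eq_iff metric_tensor_def lmul1_def)
  have "nabla 0 = 0"
    by (simp add: fun_eq_iff nabla_apply d1_apply Gam_contract_def)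
  then have "nabla_metric nabla sigma (metric_tensor (\<lambda>\<mu> \<nu>. if \<mu> = \<nu> then 1 else 0)) p q r =
      (\<Sum>\<mu>\<in>UNIV. \<Sum>\<nu>\<in>UNIV. if \<mu> = \<nu> then
        Gam T S Sb bar \<mu> p q * dx \<nu> r + dx \<mu> x * Gam T S Sb bar \<nu> y r else 0)"
    unfolding nabla_metric_def sum_fun_apply plus_fun_apply coeff
    by (intro sum.cong refl) (auto simp: nabla_dx tensor21_def tensor12_def sigma_id_apply x_def y_def)
  also have "\<dots> = (\<Sum>\<mu>\<in>UNIV. Gam T S Sb bar \<mu> p q * dx \<mu> r + dx \<mu> x * Gam T S Sb bar \<mu> y r)"
    by (simp cong: if_cong)
  also have "\<dots> = Gam T S Sb bar r p q + Gam T S Sb bar x y r"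
    by (simp add: sum.distrib dx_apply if_distrib[of "\<lambda>u. u * _"] cong: if_cong)
  also have "\<dots> = 0"
    using Gam_pair_swap[of r p q] by (simp add: x_def y_def)
  finally show "nabla_metric nabla sigma (metric_tensor (\<lambda>\<mu> \<nu>. if \<mu> = \<nu> then 1 else 0)) p q r = 0 p q r"
    by simp
qed

lemma Gam_contract_partner: "Gam_contract \<omega> p (partner q) = Gam_contract \<omega> p q"
  by (simp add: Gam_contract_def linked_partner)

lemma curvature_apply:
  "curvature nabla \<omega> a b c = d1 (\<lambda>\<mu>. nabla \<omega> \<mu> c) a b + Gam_contract (\<lambda>\<nu>. nabla \<omega> a \<nu>) b c"
proof -
  have "curvature nabla \<omega> a b c = (\<Sum>\<nu>\<in>UNIV. d1 (\<lambda>\<mu>. nabla \<omega> \<mu> \<nu>) a b * dx \<nu> c)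
      + (\<Sum>\<nu>\<in>UNIV. nabla \<omega> a \<nu> * Gam T S Sb bar \<nu> b c)"
    by (simp add: curvature_def sum_fun_apply tensor21_def tensor12_def nabla_dx pol_diff_eq_add
        sum.distrib)
  then show ?thesis
    by (simp add: sum_mult_dx sum_mult_Gam)
qed

text \<open>The Christoffel terms cancel, so the curvature is the mixed second difference of omega.\<close>

lemma curvature_eq_shifts:
  "curvature nabla \<omega> a b c = shift a (shift b (\<omega> c)) + shift b (\<omega> c) + shift a (\<omega> c) + \<omega> c"
proof (cases "linked b c")
  case True
  then have "Gam_contract \<omega> b c = \<omega> b + \<omega> (partner b)"
    and "Gam_contract (\<lambda>\<nu>. nabla \<omega> a \<nu>) b c = nabla \<omega> a b + nabla \<omega> a (partner b)"
    by (simp_all add: Gam_contract_def)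
  then show ?thesis
    by (simp add: curvature_apply nabla_apply d1_apply Gam_contract_partner algebra_simps)
next
  case False
  then show ?thesis
    by (simp add: curvature_apply nabla_apply d1_apply Gam_contract_def algebra_simps)
qed

lemma flat_nabla: "flat nabla"
  unfolding flat_def
proof
  fix \<omega> :: "'x om1"
  show "curvature nabla \<omega> \<in> wedge_ker3"
    by (rule symmetric_in_wedge_ker3) (simp add: curvature_eq_shifts shift_commute algebra_simps)
qed

end

theorem proposition5p1:
  fixes T S Sb :: "'x::finite set" and bar :: "'x \<Rightarrow> 'x"
  assumes cover: "T \<union> S \<union> Sb = UNIV"
    and disj: "T \<inter> S = {}" "T \<inter> Sb = {}" "S \<inter> Sb = {}"
    and bij: "bij_betw bar S Sb"
  shows "quantum_metric (\<lambda>\<mu> \<nu> :: 'x. if \<mu> = \<nu> then (1::bit) else 0)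
       \<and> QLC (metric_tensor (\<lambda>\<mu> \<nu> :: 'x. if \<mu> = \<nu> then (1::bit) else 0)) (nablaP T S Sb bar) (sigmaP T S Sb bar)
       \<and> flat (nablaP T S Sb bar)"
proof -
  interpret paired_partition T S Sb bar
    using assms by unfold_locales
  show ?thesis
    unfolding QLC_def
    using quantum_metric_delta bimodule_connection_nabla bij_sigma torsion_free_nabla
      metric_compatible_nabla flat_nabla by blast
qed

end
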